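(* Under the standing setting of the context, define $\boldsymbol\gamma_\epsilon(\mathbf{x}):=\mathbf{J}[\pi_\epsilon](\mathbf{x})/\pi_\epsilon(\mathbf{x})=\mathbf{b}(\mathbf{x})-\epsilon\mathbf{D}\nabla\ln\pi_\epsilon(\mathbf{x})$. For $\mathbf{x}^*\in\Gamma$ and $\mathbf{x}$ with $\|\mathbf{x}-\mathbf{x}^*\|=O(\sqrt\epsilon)$, $$\boldsymbol\gamma_\epsilon(\mathbf{x})=\mathbf{b}(\mathbf{x}^* )+\big(\mathbf{A}(\mathbf{x}^* )+\mathbf{D}[\boldsymbol\Sigma^*]^{-1}\big)(\mathbf{x}-\mathbf{x}^* )+O(\epsilon),$$ where $[\boldsymbol\Sigma^*]^{-1}=\nabla\nabla\varphi(\mathbf{x}^* )$ and, along the trajectory $\mathbf{x}^*(t)$ of $\dot{\mathbf{x}}=\mathbf{b}(\mathbf{x})$ on $\Gamma$, it satisfies $\frac{\mathrm{d}[\boldsymbol\Sigma^*]^{-1}}{\mathrm{d}t}=-[\boldsymbol\Sigma^*]^{-1}\mathbf{A}(\mathbf{x}^* )-\mathbf{A}(\mathbf{x}^* )^T[\boldsymbol\Sigma^*]^{-1}-2[\boldsymbol\Sigma^*]^{-1}\mathbf{D}[\boldsymbol\Sigma^*]^{-1}$.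
   Context: Standing setting: $\mathrm{d}\mathbf{X}_\epsilon=\mathbf{b}(\mathbf{X}_\epsilon)\mathrm{d}t+[2\epsilon\mathbf{D}]^{1/2}\mathrm{d}\mathbf{B}(t)$ on $\mathbb{R}^n$, $\mathbf{b}$ smooth with Jacobian $\mathbf{A}$, $\mathbf{D}$ constant symmetric positive definite; $\dot{\mathbf{x}}=\mathbf{b}(\mathbf{x})$ has a stable limit cycle $\Gamma$. The stationary density $\pi_\epsilon$ exists with stationary probability flux $\mathbf{J}[\pi_\epsilon]=\mathbf{b}\pi_\epsilon-\epsilon\mathbf{D}\nabla\pi_\epsilon$ (so $\nabla\cdot\mathbf{J}[\pi_\epsilon]=0$), and near $\Gamma$ it has the WKB form $\pi_\epsilon(\mathbf{x})=\hat a(\epsilon)\exp[-\varphi(\mathbf{x})/\epsilon+\ln\omega(\mathbf{x})+O(\epsilon)]$ with smooth $\varphi$ and $\omega>0$, the expansion being differentiable term by term; $\varphi=0$ and $\nabla\varphi=0$ on $\Gamma$. The regularity assumptions of the standing setting (uniform convergence of derivatives of the time-dependent WKB functions, continuity of $\mathbf{b},\mathbf{A}$, nonsingular linearized covariance equal to the inverse Hessian of the time-dependent rate function) hold. *)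

theory Defs
  imports "HOL-Analysis.Analysis"
begin

definition grad :: "(real^'n \<Rightarrow> real) \<Rightarrow> real^'n \<Rightarrow> real^'n" where
  "grad f x = (\<chi> i. frechet_derivative f (at x) (axis i 1))"

definition jac :: "(real^'n \<Rightarrow> real^'m) \<Rightarrow> real^'n \<Rightarrow> real^'n^'m" where
  "jac F x = (\<chi> i j. frechet_derivative F (at x) (axis j 1) $ i)"

definition hess :: "(real^'n \<Rightarrow> real) \<Rightarrow> real^'n \<Rightarrow> real^'n^'n" where
  "hess f x = jac (grad f) x"

definition divg :: "(real^'n \<Rightarrow> real^'n) \<Rightarrow> real^'n \<Rightarrow> real" where
  "divg F x = (\<Sum>i\<in>UNIV. frechet_derivative F (at x) (axis i 1) $ i)"

fun Ck_on :: "nat \<Rightarrow> (real^'n) set \<Rightarrow> (real^'n \<Rightarrow> real) \<Rightarrow> bool" where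
  "Ck_on 0 S f = continuous_on S f"
| "Ck_on (Suc k) S f = ((\<forall>x\<in>S. f differentiable (at x)) \<and>
      (\<forall>i. Ck_on k S (\<lambda>x. frechet_derivative f (at x) (axis i 1))))"

definition smooth_on :: "(real^'n) set \<Rightarrow> (real^'n \<Rightarrow> real) \<Rightarrow> bool" where
  "smooth_on S f = (\<forall>k. Ck_on k S f)"

definition smooth_vec_on :: "(real^'n) set \<Rightarrow> (real^'n \<Rightarrow> real^'m) \<Rightarrow> bool" where
  "smooth_vec_on S F = (\<forall>i. smooth_on S (\<lambda>x. F x $ i))"

definition forward_solution :: "(real^'n \<Rightarrow> real^'n) \<Rightarrow> (real \<Rightarrow> real^'n) \<Rightarrow> bool" where
  "forward_solution b x = (\<forall>t\<ge>0. (x has_vector_derivative b (x t)) (at t within {0..}))"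

definition stable_limit_cycle :: "(real^'n \<Rightarrow> real^'n) \<Rightarrow> (real^'n) set \<Rightarrow> bool" where
  "stable_limit_cycle b \<Gamma> =
    ((\<exists>p T. T > 0 \<and> (\<forall>t. (p has_vector_derivative b (p t)) (at t)) \<and>
        (\<forall>t. p (t + T) = p t) \<and> b (p 0) \<noteq> 0 \<and> \<Gamma> = p ` {0..T}) \<and>
     (\<forall>e>0. \<exists>d>0. \<forall>x. forward_solution b x \<and> infdist (x 0) \<Gamma> < d \<longrightarrow>
        (\<forall>t\<ge>0. infdist (x t) \<Gamma> < e)) \<and>
     (\<exists>d>0. \<forall>x. forward_solution b x \<and> infdist (x 0) \<Gamma> < d \<longrightarrow>
        ((\<lambda>t. infdist (x t) \<Gamma>) \<longlongrightarrow> 0) at_top))"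

definition flux :: "(real^'n \<Rightarrow> real^'n) \<Rightarrow> real^'n^'n \<Rightarrow> real \<Rightarrow> (real^'n \<Rightarrow> real) \<Rightarrow> real^'n \<Rightarrow> real^'n" where
  "flux b D \<epsilon> p x = p x *\<^sub>R b x - \<epsilon> *\<^sub>R (D *v grad p x)"

text \<open>gamma_eps = J[pi]/pi = b - eps D grad ln pi.\<close>
definition gammaf :: "(real^'n \<Rightarrow> real^'n) \<Rightarrow> real^'n^'n \<Rightarrow> real \<Rightarrow> (real^'n \<Rightarrow> real) \<Rightarrow> real^'n \<Rightarrow> real^'n" where
  "gammaf b D \<epsilon> p x = b x - \<epsilon> *\<^sub>R (D *v grad (\<lambda>y. ln (p y)) x)"

end

theory Submission
  imports Defs
begin

text \<open>
  Substituting the WKB form into the stationarity condition \<open>div J[\<pi>\<^sub>\<epsilon>] = 0\<close> and dividing by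
  \<open>\<pi>\<^sub>\<epsilon>\<close> gives an identity whose \<open>1/\<epsilon>\<close>-part must vanish as \<open>\<epsilon> \<rightarrow> 0\<close>: this is the
  Hamilton--Jacobi equation \<open>\<nabla>\<phi> \<cdot> (b + D \<nabla>\<phi>) = 0\<close>. Differentiating it twice at a point of
  \<open>\<Gamma>\<close>, where \<open>\<nabla>\<phi>\<close> vanishes, turns the derivative of \<open>\<nabla>\<nabla>\<phi>\<close> along the flow into the
  Riccati expression. For the drift, \<open>\<gamma>\<^sub>\<epsilon> = b - \<epsilon> D \<nabla>ln \<pi>\<^sub>\<epsilon> = b + D \<nabla>\<phi> + O(\<epsilon>)\<close>, and
  first-order Taylor expansions of \<open>b\<close> and \<open>\<nabla>\<phi>\<close> about \<open>x\<^sup>*\<close> have remainders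
  \<open>O(\<parallel>x - x\<^sup>*\<parallel>\<^sup>2) = O(\<epsilon>)\<close>, uniformly on a compact neighbourhood of \<open>\<Gamma>\<close>.
\<close>

section \<open>Partial derivatives\<close>

definition pd :: "'n \<Rightarrow> (real^'n \<Rightarrow> real) \<Rightarrow> real^'n \<Rightarrow> real" where
  "pd i f x = frechet_derivative f (at x) (axis i 1)"

lemma grad_nth [simp]: "grad f x $ i = pd i f x"
  by (simp add: grad_def pd_def)

lemma pd_eq_has_derivative:
  assumes "(f has_derivative f') (at x)"
  shows "pd i f x = f' (axis i 1)"
  using frechet_derivative_at[OF assms] by (simp add: pd_def)

lemma has_derivative_grad:
  fixes f :: "real^'n \<Rightarrow> real"
  assumes "f differentiable (at x)"
  shows "(f has_derivative (\<lambda>h. grad f x \<bullet> h)) (at x)"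
proof -
  have d: "(f has_derivative frechet_derivative f (at x)) (at x)"
    using assms frechet_derivative_works by blast
  have "frechet_derivative f (at x) h = grad f x \<bullet> h" for h
  proof -
    have "frechet_derivative f (at x) h = frechet_derivative f (at x) (\<Sum>i\<in>UNIV. h $ i *\<^sub>R axis i 1)"
      using basis_expansion[of h] by (simp add: scalar_mult_eq_scaleR)
    also have "\<dots> = (\<Sum>i\<in>UNIV. h $ i * pd i f x)"
      using has_derivative_linear[OF d] by (simp add: linear_sum linear_scale pd_def)
    finally show ?thesis by (simp add: inner_vec_def mult.commute)
  qed
  then have "frechet_derivative f (at x) = (\<lambda>h. grad f x \<bullet> h)" by (rule ext)
  with d show ?thesis by simp
qed

lemma grad_eqI:
  fixes f :: "real^'n \<Rightarrow> real"
  assumes "(f has_derivative (\<lambda>h. v \<bullet> h)) (at x)"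
  shows "grad f x = v"
  using pd_eq_has_derivative[OF assms] by (simp add: vec_eq_iff inner_axis)

lemma has_derivative_vec_lambda:
  fixes F :: "'a::real_normed_vector \<Rightarrow> 'b::euclidean_space ^ 'm"
  assumes "\<And>i. ((\<lambda>x. F x $ i) has_derivative F' i) (at x)"
  shows "(F has_derivative (\<lambda>h. \<chi> i. F' i h)) (at x)"
proof (rule has_derivative_componentwise_within[THEN iffD2], intro ballI)
  fix u :: "'b^'m" assume "u \<in> Basis"
  then obtain i v where u: "u = axis i v" and v: "v \<in> Basis" by (auto simp: Basis_vec_def)
  have "((\<lambda>x. F x $ i \<bullet> v) has_derivative (\<lambda>h. F' i h \<bullet> v)) (at x)"
    using assms[of i, THEN has_derivative_componentwise_within[THEN iffD1]] v by blast
  then show "((\<lambda>x. F x \<bullet> u) has_derivative (\<lambda>h. (\<chi> i. F' i h) \<bullet> u)) (at x)"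
    by (simp add: u inner_axis)
qed

lemma has_derivative_jac:
  fixes F :: "real^'n \<Rightarrow> real^'m"
  assumes "F differentiable (at x)"
  shows "(F has_derivative (\<lambda>h. jac F x *v h)) (at x)"
proof -
  have "jac F x = jacobian F (at x)" by (simp add: jac_def jacobian_def matrix_def)
  then show ?thesis using jacobian_works[THEN iffD1, OF assms] by simp
qed

lemma jac_eqI:
  fixes F :: "real^'n \<Rightarrow> real^'m"
  assumes "(F has_derivative (\<lambda>h. M *v h)) (at x)"
  shows "jac F x = M"
  using frechet_derivative_at[OF assms, symmetric]
  by (simp add: jac_def vec_eq_iff matrix_vector_mult_basis column_def)

lemma differentiable_grad:
  fixes f :: "real^'n \<Rightarrow> real"
  assumes "\<And>i. pd i f differentiable (at x)"
  shows "grad f differentiable (at x)"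
proof -
  have "grad f = (\<lambda>y. \<chi> i. pd i f y)" by (simp add: fun_eq_iff vec_eq_iff)
  moreover have "((\<lambda>y. \<chi> i. pd i f y) has_derivative (\<lambda>h. \<chi> i. grad (pd i f) x \<bullet> h)) (at x)"
    by (rule has_derivative_vec_lambda) (simp add: has_derivative_grad[OF assms])
  ultimately show ?thesis by (metis differentiableI)
qed

lemma has_derivative_grad_hess:
  fixes f :: "real^'n \<Rightarrow> real"
  assumes "\<And>i. pd i f differentiable (at x)"
  shows "(grad f has_derivative (\<lambda>h. hess f x *v h)) (at x)"
  unfolding hess_def by (rule has_derivative_jac[OF differentiable_grad[OF assms]])

lemma hess_nth:
  fixes f :: "real^'n \<Rightarrow> real"
  assumes "\<And>i. pd i f differentiable (at x)"
  shows "hess f x $ i $ j = pd j (pd i f) x"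
proof -
  have "(\<lambda>y. grad f y $ i) = pd i f" by (simp add: fun_eq_iff)
  then have "((\<lambda>y. grad f y $ i) has_derivative (\<lambda>h. (hess f x *v h) $ i)) (at x)"
    using bounded_linear.has_derivative[OF bounded_linear_vec_nth has_derivative_grad_hess[OF assms]]
    by simp
  then show ?thesis
    using pd_eq_has_derivative[of "\<lambda>y. grad f y $ i" _ x j]
    by (simp add: matrix_vector_mult_basis column_def \<open>(\<lambda>y. grad f y $ i) = pd i f\<close>)
qed

lemma pd_vec_nth_eq_matrix:
  assumes "(F has_derivative (\<lambda>h. M *v h)) (at y)"
  shows "pd k (\<lambda>z. F z $ i) y = M $ i $ k"
  using pd_eq_has_derivative[OF bounded_linear.has_derivative[OF bounded_linear_vec_nth assms]]
  by (simp add: matrix_vector_mult_basis column_def)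

lemma pd_cong_open:
  assumes "open U" "x \<in> U" "\<And>y. y \<in> U \<Longrightarrow> f y = g y"
  shows "pd i f x = pd i g x"
proof -
  have "(f has_derivative f') (at x) \<longleftrightarrow> (g has_derivative f') (at x)" for f'
    using has_derivative_transform_within_open[OF _ assms(1,2), of f _ UNIV g]
          has_derivative_transform_within_open[OF _ assms(1,2), of g _ UNIV f] assms(3) by auto
  then show ?thesis by (simp add: pd_def frechet_derivative_def)
qed

lemma differentiable_cong_open:
  assumes "open U" "x \<in> U" "\<And>y. y \<in> U \<Longrightarrow> f y = g y" "g differentiable (at x)"
  shows "f differentiable (at x)"
  using assms has_derivative_transform_within_open[OF _ assms(1,2), of g _ UNIV f]
  unfolding differentiable_def by metis

lemma pd_eq_0_open:
  assumes "open U" "x \<in> U" "\<And>y. y \<in> U \<Longrightarrow> f y = 0"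
  shows "pd i f x = 0"
  using pd_cong_open[OF assms] pd_eq_has_derivative[of "\<lambda>_. 0" "\<lambda>_. 0" x i] by simp

lemma pd_add:
  assumes "f differentiable (at y)" "g differentiable (at y)"
  shows "pd l (\<lambda>z. f z + g z) y = pd l f y + pd l g y"
  using pd_eq_has_derivative[OF has_derivative_add[OF has_derivative_grad[OF assms(1)] has_derivative_grad[OF assms(2)]]]
  by (simp add: inner_axis)

lemma pd_cmult:
  assumes "f differentiable (at y)"
  shows "pd l (\<lambda>z. c * f z) y = c * pd l f y"
  using pd_eq_has_derivative[OF has_derivative_mult_right[OF has_derivative_grad[OF assms]]]
  by (simp add: inner_axis)

lemma pd_mult:
  assumes "f differentiable (at y)" "g differentiable (at y)"
  shows "pd l (\<lambda>z. f z * g z) y = pd l f y * g y + f y * pd l g y"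
  using pd_eq_has_derivative[OF has_derivative_mult[OF has_derivative_grad[OF assms(1)] has_derivative_grad[OF assms(2)]]]
  by (simp add: inner_axis)

lemma pd_sum:
  fixes f :: "'i \<Rightarrow> real^'n \<Rightarrow> real"
  assumes "\<And>i. i \<in> I \<Longrightarrow> f i differentiable (at y)"
  shows "pd l (\<lambda>z. \<Sum>i\<in>I. f i z) y = (\<Sum>i\<in>I. pd l (f i) y)"
proof -
  have "((\<lambda>z. \<Sum>i\<in>I. f i z) has_derivative (\<lambda>h. \<Sum>i\<in>I. grad (f i) y \<bullet> h)) (at y)"
    by (intro has_derivative_sum has_derivative_grad assms)
  from pd_eq_has_derivative[OF this] show ?thesis by (simp add: inner_axis)
qed

lemma has_derivative_ln_grad:
  fixes f :: "real^'n \<Rightarrow> real"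
  assumes "f differentiable (at y)" "f y > 0"
  shows "((\<lambda>z. ln (f z)) has_derivative (\<lambda>h. (grad f y \<bullet> h) / f y)) (at y)"
  using assms by (auto intro!: derivative_eq_intros has_derivative_grad simp: field_simps)

lemma pd_ln:
  fixes f :: "real^'n \<Rightarrow> real"
  assumes "f differentiable (at y)" "f y > 0"
  shows "pd i (\<lambda>z. ln (f z)) y = pd i f y / f y"
  using pd_eq_has_derivative[OF has_derivative_ln_grad[OF assms]] by (simp add: inner_axis)

lemma grad_ln_eq:
  fixes f :: "real^'n \<Rightarrow> real"
  assumes "f differentiable (at y)" "f y > 0"
  shows "grad (\<lambda>z. ln (f z)) y = (1 / f y) *\<^sub>R grad f y"
  by (rule grad_eqI, rule has_derivative_eq_rhs[OF has_derivative_ln_grad[OF assms]]) simp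

lemma smooth_on_pd: "smooth_on U f \<Longrightarrow> smooth_on U (pd i f)"
  unfolding smooth_on_def
proof
  fix k assume "\<forall>k. Ck_on k U f"
  then have "Ck_on (Suc k) U f" by blast
  then show "Ck_on k U (pd i f)" by (simp add: pd_def[abs_def])
qed

lemma smooth_on_imp_differentiable: "smooth_on U f \<Longrightarrow> x \<in> U \<Longrightarrow> f differentiable (at x)"
  unfolding smooth_on_def by (metis Ck_on.simps(2))

lemma smooth_on_imp_continuous_on: "smooth_on U f \<Longrightarrow> continuous_on U f"
  unfolding smooth_on_def by (metis Ck_on.simps(1))

lemma has_real_derivative_pd_line:
  fixes f :: "real^'n \<Rightarrow> real"
  assumes "f differentiable (at (p + s *\<^sub>R axis i 1))"
  shows "((\<lambda>s. f (p + s *\<^sub>R axis i 1)) has_real_derivative pd i f (p + s *\<^sub>R axis i 1)) (at s)"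
proof -
  let ?u = "axis i (1::real)"
  have "((\<lambda>s. p + s *\<^sub>R ?u) has_derivative (\<lambda>h. h *\<^sub>R ?u)) (at s)"
    by (auto intro!: derivative_eq_intros)
  from has_derivative_compose[OF this has_derivative_grad[OF assms]]
  have "((\<lambda>s. f (p + s *\<^sub>R ?u)) has_derivative (\<lambda>h. grad f (p + s *\<^sub>R ?u) \<bullet> (h *\<^sub>R ?u))) (at s)" .
  then show ?thesis by (simp add: has_field_derivative_def inner_axis mult.commute[of _ "pd i f _"])
qed

lemma second_difference_mvt:
  fixes f :: "real^'n \<Rightarrow> real"
  assumes ball: "ball x (3*t) \<subseteq> U" and t: "t > 0"
    and df: "\<And>y. y \<in> U \<Longrightarrow> f differentiable (at y)"
    and dpf: "\<And>y. y \<in> U \<Longrightarrow> pd a f differentiable (at y)"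
  shows "\<exists>\<xi>. norm (\<xi> - x) \<le> 2*t \<and>
     f (x + t *\<^sub>R axis a 1 + t *\<^sub>R axis c 1) - f (x + t *\<^sub>R axis a 1)
       - f (x + t *\<^sub>R axis c 1) + f x = t^2 * pd c (pd a f) \<xi>"
proof -
  let ?u = "axis a (1::real)" and ?v = "axis c (1::real)"
  have inU: "x + s *\<^sub>R ?u + r *\<^sub>R ?v \<in> U" if "0 \<le> s" "s \<le> t" "0 \<le> r" "r \<le> t" for s r
  proof -
    have "norm (s *\<^sub>R ?u + r *\<^sub>R ?v) \<le> s + r"
      using norm_triangle_ineq[of "s *\<^sub>R ?u" "r *\<^sub>R ?v"] that by simp
    moreover have "dist x (x + s *\<^sub>R ?u + r *\<^sub>R ?v) = norm (s *\<^sub>R ?u + r *\<^sub>R ?v)"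
      by (simp add: dist_norm norm_minus_commute add.assoc add.commute)
    ultimately have "dist x (x + s *\<^sub>R ?u + r *\<^sub>R ?v) < 3*t"
      using that t by linarith
    then show ?thesis using ball by auto
  qed
  define \<Delta> where "\<Delta> s = f (x + t *\<^sub>R ?v + s *\<^sub>R ?u) - f (x + s *\<^sub>R ?u)" for s
  obtain z where z: "0 < z" "z < t" and eq1: "\<Delta> t - \<Delta> 0 = t *
      (pd a f (x + t *\<^sub>R ?v + z *\<^sub>R ?u) - pd a f (x + z *\<^sub>R ?u))"
  proof -
    have "\<exists>z. 0 < z \<and> z < t \<and> \<Delta> t - \<Delta> 0 = (t - 0) *
      (pd a f (x + t *\<^sub>R ?v + z *\<^sub>R ?u) - pd a f (x + z *\<^sub>R ?u))"
      unfolding \<Delta>_def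
    proof (rule MVT2[OF t])
      fix s assume s: "0 \<le> s" "s \<le> t"
      have "x + t *\<^sub>R ?v + s *\<^sub>R ?u \<in> U" using inU[of s t] s t by (simp add: algebra_simps)
      moreover have "x + s *\<^sub>R ?u \<in> U" using inU[of s 0] s t by simp
      ultimately show "((\<lambda>s. f (x + t *\<^sub>R ?v + s *\<^sub>R ?u) - f (x + s *\<^sub>R ?u)) has_real_derivative
         pd a f (x + t *\<^sub>R ?v + s *\<^sub>R ?u) - pd a f (x + s *\<^sub>R ?u)) (at s)"
        by (intro DERIV_diff has_real_derivative_pd_line df)
    qed
    then show ?thesis using that by auto
  qed
  obtain w where w: "0 < w" "w < t" and eq2: "pd a f ((x + z *\<^sub>R ?u) + t *\<^sub>R ?v)
      - pd a f (x + z *\<^sub>R ?u) = t * pd c (pd a f) ((x + z *\<^sub>R ?u) + w *\<^sub>R ?v)"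
  proof -
    have "\<exists>w. 0 < w \<and> w < t \<and> pd a f ((x + z *\<^sub>R ?u) + t *\<^sub>R ?v)
       - pd a f ((x + z *\<^sub>R ?u) + 0 *\<^sub>R ?v) = (t - 0) * pd c (pd a f) ((x + z *\<^sub>R ?u) + w *\<^sub>R ?v)"
    proof (rule MVT2[OF t])
      fix r assume r: "0 \<le> r" "r \<le> t"
      have "x + z *\<^sub>R ?u + r *\<^sub>R ?v \<in> U" using inU[of z r] r z by simp
      then show "((\<lambda>r. pd a f ((x + z *\<^sub>R ?u) + r *\<^sub>R ?v)) has_real_derivative
          pd c (pd a f) ((x + z *\<^sub>R ?u) + r *\<^sub>R ?v)) (at r)"
        by (intro has_real_derivative_pd_line dpf)
    qed
    then show ?thesis using that by auto
  qed
  show ?thesis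
  proof (intro exI conjI)
    have "norm (z *\<^sub>R ?u + w *\<^sub>R ?v) \<le> z + w"
      using norm_triangle_ineq[of "z *\<^sub>R ?u" "w *\<^sub>R ?v"] z w by simp
    then show "norm ((x + z *\<^sub>R ?u + w *\<^sub>R ?v) - x) \<le> 2*t" using z w by (simp add: algebra_simps)
    have "f (x + t *\<^sub>R ?u + t *\<^sub>R ?v) - f (x + t *\<^sub>R ?u) - f (x + t *\<^sub>R ?v) + f x = \<Delta> t - \<Delta> 0"
      by (simp add: \<Delta>_def algebra_simps)
    also have "\<dots> = t^2 * pd c (pd a f) (x + z *\<^sub>R ?u + w *\<^sub>R ?v)"
      using eq1 eq2 by (simp add: algebra_simps power2_eq_square)
    finally show "f (x + t *\<^sub>R ?u + t *\<^sub>R ?v) - f (x + t *\<^sub>R ?u) - f (x + t *\<^sub>R ?v) + f x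
       = t^2 * pd c (pd a f) (x + z *\<^sub>R ?u + w *\<^sub>R ?v)" .
  qed
qed

text \<open>Schwarz's theorem: both mixed partials are limits of the same second difference quotient.\<close>

lemma pd_commute:
  fixes f :: "real^'n \<Rightarrow> real"
  assumes U: "open U" and x: "x \<in> U"
    and df: "\<And>y. y \<in> U \<Longrightarrow> f differentiable (at y)"
    and da: "\<And>y. y \<in> U \<Longrightarrow> pd a f differentiable (at y)"
    and dc: "\<And>y. y \<in> U \<Longrightarrow> pd c f differentiable (at y)"
    and ca: "continuous_on U (pd c (pd a f))"
    and cc: "continuous_on U (pd a (pd c f))"
  shows "pd c (pd a f) x = pd a (pd c f) x"
proof (rule ccontr)
  assume ne: "pd c (pd a f) x \<noteq> pd a (pd c f) x"
  define e where "e = \<bar>pd c (pd a f) x - pd a (pd c f) x\<bar> / 2"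
  have e: "e > 0" using ne by (simp add: e_def)
  obtain r where r: "r > 0" "ball x r \<subseteq> U" using U x open_contains_ball by blast
  obtain d1 where d1: "d1 > 0" "\<And>y. dist y x < d1 \<Longrightarrow> dist (pd c (pd a f) y) (pd c (pd a f) x) < e"
    using ca U x e unfolding continuous_on_eq_continuous_at[OF U] continuous_at_eps_delta by blast
  obtain d2 where d2: "d2 > 0" "\<And>y. dist y x < d2 \<Longrightarrow> dist (pd a (pd c f) y) (pd a (pd c f) x) < e"
    using cc U x e unfolding continuous_on_eq_continuous_at[OF U] continuous_at_eps_delta by blast
  define t where "t = min (r/3) (min d1 d2 / 3)"
  have t: "t > 0" using r d1 d2 by (simp add: t_def)
  have b: "ball x (3*t) \<subseteq> U" using r by (auto simp: t_def)
  obtain \<xi> where \<xi>: "norm (\<xi> - x) \<le> 2*t" and eq1: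
     "f (x + t *\<^sub>R axis a 1 + t *\<^sub>R axis c 1) - f (x + t *\<^sub>R axis a 1)
       - f (x + t *\<^sub>R axis c 1) + f x = t^2 * pd c (pd a f) \<xi>"
    using second_difference_mvt[OF b t df da] by blast
  obtain \<eta> where \<eta>: "norm (\<eta> - x) \<le> 2*t" and eq2:
     "f (x + t *\<^sub>R axis c 1 + t *\<^sub>R axis a 1) - f (x + t *\<^sub>R axis c 1)
       - f (x + t *\<^sub>R axis a 1) + f x = t^2 * pd a (pd c f) \<eta>"
    using second_difference_mvt[OF b t df dc] by blast
  have "pd c (pd a f) \<xi> = pd a (pd c f) \<eta>"
    using eq1 eq2 t by (simp add: algebra_simps)
  moreover have "dist \<xi> x < d1" "dist \<eta> x < d2"
    using \<xi> \<eta> t d1 d2 by (simp_all add: dist_norm t_def)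
  then have "\<bar>pd c (pd a f) \<xi> - pd c (pd a f) x\<bar> < e" "\<bar>pd a (pd c f) \<eta> - pd a (pd c f) x\<bar> < e"
    using d1(2) d2(2) by (simp_all add: dist_real_def)
  ultimately have "\<bar>pd c (pd a f) x - pd a (pd c f) x\<bar> < 2 * e" by linarith
  then show False by (simp add: e_def)
qed

lemma smooth_on_pd_commute:
  fixes f :: "real^'n \<Rightarrow> real"
  assumes "open U" "x \<in> U" "smooth_on U f"
  shows "pd c (pd a f) x = pd a (pd c f) x"
  using assms
  by (intro pd_commute) (auto intro: smooth_on_imp_differentiable smooth_on_pd smooth_on_imp_continuous_on)

lemma smooth_on_pd_pd_pd_commute:
  fixes f :: "real^'n \<Rightarrow> real"
  assumes U: "open U" and x: "x \<in> U" and f: "smooth_on U f"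
  shows "pd k (pd l (pd i f)) x = pd i (pd k (pd l f)) x"
proof -
  have "pd k (pd l (pd i f)) x = pd k (pd i (pd l f)) x"
    by (rule pd_cong_open[OF U x]) (simp add: smooth_on_pd_commute[OF U _ f])
  also have "\<dots> = pd i (pd k (pd l f)) x"
    by (rule smooth_on_pd_commute[OF U x smooth_on_pd[OF f]])
  finally show ?thesis .
qed

lemma hess_symmetric:
  assumes "open U" "x \<in> U" "smooth_on U f"
  shows "transpose (hess f x) = hess f x"
proof -
  have "\<And>i. pd i f differentiable (at x)"
    using assms by (blast intro: smooth_on_imp_differentiable smooth_on_pd)
  then show ?thesis
    using smooth_on_pd_commute[OF assms] by (simp add: vec_eq_iff transpose_def hess_nth)
qed

lemma has_derivative_grad_ln_hess:
  fixes f :: "real^'n \<Rightarrow> real"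
  assumes U: "open U" and f: "smooth_on U f" and pos: "\<And>y. y \<in> U \<Longrightarrow> f y > 0" and x: "x \<in> U"
  shows "(grad (\<lambda>z. ln (f z)) has_derivative (\<lambda>h. hess (\<lambda>z. ln (f z)) x *v h)) (at x)"
proof (rule has_derivative_grad_hess)
  fix i
  show "pd i (\<lambda>z. ln (f z)) differentiable (at x)"
  proof (rule differentiable_cong_open[OF U x])
    show "pd i (\<lambda>z. ln (f z)) y = pd i f y / f y" if "y \<in> U" for y
      using pd_ln smooth_on_imp_differentiable[OF f that] pos[OF that] by blast
    show "(\<lambda>y. pd i f y / f y) differentiable (at x)"
      using smooth_on_imp_differentiable[OF smooth_on_pd[OF f] x] smooth_on_imp_differentiable[OF f x]
        pos[OF x] by (auto intro!: derivative_intros)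
  qed
qed

lemma transpose_add: "transpose (A + B) = transpose A + transpose B"
  by (simp add: transpose_def vec_eq_iff)

lemma matrix_add_rdistrib: "(A + B) ** C = A ** C + B ** C"
  by (simp add: matrix_matrix_mult_def vec_eq_iff sum.distrib distrib_right)

lemma matrix_diff_ldistrib: "(A::real^'n^'m) ** (B - C) = A ** B - A ** C"
  by (simp add: matrix_matrix_mult_def vec_eq_iff sum_subtractf algebra_simps)

lemma matrix_scaleR_right: "(A::real^'n^'m) ** (c *\<^sub>R B) = c *\<^sub>R (A ** B)"
  by (simp add: matrix_scalar_ac scalar_matrix_assoc)

lemma tendsto_trace [tendsto_intros]:
  fixes M :: "'a \<Rightarrow> real^'n^'n"
  assumes "(M \<longlongrightarrow> L) F"
  shows "((\<lambda>x. trace (M x)) \<longlongrightarrow> trace L) F"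
  unfolding trace_def by (rule tendsto_sum) (rule tendsto_vec_nth[OF tendsto_vec_nth[OF assms]])

lemma tendsto_matrix_mult_left [tendsto_intros]:
  fixes D :: "real^'n^'m"
  assumes "(M \<longlongrightarrow> L) F"
  shows "((\<lambda>x. D ** M x) \<longlongrightarrow> D ** L) F"
  unfolding matrix_matrix_mult_def by (intro tendsto_intros assms)

lemma tendsto_matrix_vector_mult_left [tendsto_intros]:
  fixes D :: "real^'n^'m"
  assumes "(v \<longlongrightarrow> w) F"
  shows "((\<lambda>x. D *v v x) \<longlongrightarrow> D *v w) F"
  by (rule bounded_linear.tendsto[OF matrix_vector_mul_bounded_linear assms])

lemma onorm_inner_le: "onorm (\<lambda>h. (v::real^'n) \<bullet> h) \<le> norm v"
  by (rule onorm_le) (simp add: Cauchy_Schwarz_ineq2)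

lemma norm_le_card_mult_bound:
  fixes v :: "real^'n"
  assumes "\<And>i. \<bar>v $ i\<bar> \<le> M"
  shows "norm v \<le> real CARD('n) * M"
proof -
  have "norm v \<le> (\<Sum>i\<in>UNIV. \<bar>v $ i\<bar>)" by (rule norm_le_l1_cart)
  also have "\<dots> \<le> (\<Sum>i\<in>(UNIV::'n set). M)" using assms by (intro sum_mono) auto
  finally show ?thesis by simp
qed

section \<open>Uniform Taylor estimates\<close>

lemma taylor_remainder_bound:
  fixes f :: "real^'n \<Rightarrow> real"
  assumes df: "\<And>z. z \<in> closed_segment y x \<Longrightarrow> f differentiable (at z)"
    and ddf: "\<And>z j. z \<in> closed_segment y x \<Longrightarrow> pd j f differentiable (at z)"
    and M: "\<And>z i j. z \<in> closed_segment y x \<Longrightarrow> \<bar>pd i (pd j f) z\<bar> \<le> M"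
  shows "\<bar>f x - f y - grad f y \<bullet> (x - y)\<bar> \<le> real CARD('n) * real CARD('n) * M * norm (x - y)^2"
proof -
  let ?S = "closed_segment y x" and ?n = "real CARD('n)"
  have yS: "y \<in> ?S" by simp
  have M0: "0 \<le> M" using M[OF yS] by (meson abs_ge_zero order_trans)
  have grad_lipschitz: "\<bar>pd j f z - pd j f y\<bar> \<le> ?n * M * norm (x - y)" if z: "z \<in> ?S" for z j
  proof -
    have "norm (pd j f z - pd j f y) \<le> ?n * M * norm (z - y)"
    proof (rule differentiable_bound[OF convex_closed_segment _ _ z yS])
      fix w assume w: "w \<in> ?S"
      show "(pd j f has_derivative (\<lambda>h. grad (pd j f) w \<bullet> h)) (at w within ?S)"
        using has_derivative_grad[OF ddf[OF w]] has_derivative_at_withinI by blast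
      have "onorm (\<lambda>h. grad (pd j f) w \<bullet> h) \<le> norm (grad (pd j f) w)" by (rule onorm_inner_le)
      also have "\<dots> \<le> ?n * M" by (rule norm_le_card_mult_bound) (simp add: M[OF w])
      finally show "onorm (\<lambda>h. grad (pd j f) w \<bullet> h) \<le> ?n * M" .
    qed
    also have "\<dots> \<le> ?n * M * norm (x - y)"
      using segment_bound(1)[OF z] M0 by (intro mult_left_mono) auto
    finally show ?thesis by simp
  qed
  have "norm (f x - f y - grad f y \<bullet> (x - y)) \<le> norm (x - y) * (?n * (?n * M * norm (x - y)))"
  proof (rule differentiable_bound_linearization[where S = ?S and f' = "\<lambda>z h. grad f z \<bullet> h"])
    show "\<And>t. t \<in> {0..1} \<Longrightarrow> y + t *\<^sub>R (x - y) \<in> ?S"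
      by (auto simp: closed_segment_def algebra_simps intro!: exI[where x="_::real"])
    show "\<And>z. z \<in> ?S \<Longrightarrow> (f has_derivative (\<lambda>h. grad f z \<bullet> h)) (at z within ?S)"
      using has_derivative_grad[OF df] has_derivative_at_withinI by blast
    show "y \<in> ?S" by (rule yS)
    fix z assume z: "z \<in> ?S"
    have "onorm ((\<lambda>h. grad f z \<bullet> h) - (\<lambda>h. grad f y \<bullet> h)) \<le> norm (grad f z - grad f y)"
      using onorm_inner_le[of "grad f z - grad f y"] by (simp add: fun_diff_def inner_diff_left)
    also have "\<dots> \<le> ?n * (?n * M * norm (x - y))"
      by (rule norm_le_card_mult_bound) (simp add: grad_lipschitz[OF z])
    finally show "onorm ((\<lambda>h. grad f z \<bullet> h) - (\<lambda>h. grad f y \<bullet> h)) \<le> ?n * (?n * M * norm (x - y))" .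
  qed
  then show ?thesis by (simp add: power2_eq_square algebra_simps)
qed

lemma compact_Union_cball:
  fixes S :: "'a::euclidean_space set"
  assumes "compact S"
  shows "compact (\<Union>x\<in>S. cball x e)"
proof -
  have "(\<Union>x\<in>S. cball x e) = {x + y | x y. x \<in> S \<and> y \<in> cball 0 e}"
  proof (intro set_eqI iffI)
    fix z assume "z \<in> (\<Union>x\<in>S. cball x e)"
    then obtain x where "x \<in> S" "z \<in> cball x e" by blast
    then show "z \<in> {x + y | x y. x \<in> S \<and> y \<in> cball 0 e}"
      by (intro CollectI exI[of _ x] exI[of _ "z - x"]) (auto simp: dist_norm norm_minus_commute)
  next
    fix z assume "z \<in> {x + y | x y. x \<in> S \<and> y \<in> cball 0 e}"
    then obtain x y where "x \<in> S" "norm y \<le> e" "z = x + y" by auto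
    then have "z \<in> cball x e" by (simp add: dist_norm)
    with \<open>x \<in> S\<close> show "z \<in> (\<Union>x\<in>S. cball x e)" by blast
  qed
  then show ?thesis using compact_sums[OF assms compact_cball[of 0 e]] by simp
qed

lemma uniform_taylor_bound:
  fixes F :: "real^'n \<Rightarrow> real^'m"
  assumes S: "compact S" and SU: "(\<Union>x\<in>S. cball x \<delta>) \<subseteq> U"
    and F: "\<And>i. smooth_on U (\<lambda>y. F y $ i)"
  obtains M where "\<And>xs x. xs \<in> S \<Longrightarrow> norm (x - xs) \<le> \<delta> \<Longrightarrow>
    norm (F x - F xs - jac F xs *v (x - xs)) \<le> M * norm (x - xs)^2"
proof -
  let ?N = "\<Union>x\<in>S. cball x \<delta>" and ?n = "real CARD('n)" and ?m = "real CARD('m)"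
  let ?F = "\<lambda>i y. F y $ i"
  have bdd: "bounded (pd a (pd c (?F i)) ` ?N)" for i a c
    using continuous_on_subset[OF smooth_on_imp_continuous_on[OF smooth_on_pd[OF smooth_on_pd[OF F]]] SU]
    by (intro compact_imp_bounded compact_continuous_image compact_Union_cball[OF S])
  have "bounded (\<Union>i. \<Union>a. \<Union>c. pd a (pd c (?F i)) ` ?N)"
    by (intro bounded_UN ballI bdd) simp_all
  then obtain M0 where M0_bound: "\<forall>v \<in> (\<Union>i. \<Union>a. \<Union>c. pd a (pd c (?F i)) ` ?N). norm v \<le> M0"
    unfolding bounded_iff by blast
  have M0: "\<bar>pd a (pd c (?F i)) z\<bar> \<le> M0" if "z \<in> ?N" for i a c z
  proof -
    have "pd a (pd c (?F i)) z \<in> (\<Union>i. \<Union>a. \<Union>c. pd a (pd c (?F i)) ` ?N)" using that by blast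
    from bspec[OF M0_bound this] show ?thesis by simp
  qed
  show ?thesis
  proof
    fix xs x assume xs: "xs \<in> S" and x: "norm (x - xs) \<le> \<delta>"
    have seg: "closed_segment xs x \<subseteq> ?N"
    proof
      fix z assume "z \<in> closed_segment xs x"
      then have "dist xs z \<le> \<delta>"
        using segment_bound(1) x order_trans by (metis dist_norm norm_minus_commute)
      then have "z \<in> cball xs \<delta>" by simp
      then show "z \<in> ?N" by (rule UN_I[OF xs])
    qed
    have segU: "z \<in> U" if "z \<in> closed_segment xs x" for z
      using subsetD[OF SU subsetD[OF seg that]] .
    have Fd: "(F has_derivative (\<lambda>h. \<chi> i. grad (?F i) xs \<bullet> h)) (at xs)"
      using smooth_on_imp_differentiable[OF F segU] by (intro has_derivative_vec_lambda has_derivative_grad) auto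
    have jac_eq: "(\<lambda>h. jac F xs *v h) = (\<lambda>h. \<chi> i. grad (?F i) xs \<bullet> h)"
      by (rule has_derivative_unique[OF has_derivative_jac[OF differentiableI[OF Fd]] Fd])
    have jac: "(jac F xs *v h) $ i = grad (?F i) xs \<bullet> h" for h i
      using fun_cong[OF jac_eq, of h] by simp
    have "norm (F x - F xs - jac F xs *v (x - xs)) \<le> ?m * (?n * ?n * M0 * norm (x - xs)^2)"
    proof (rule norm_le_card_mult_bound)
      fix i
      have "\<bar>?F i x - ?F i xs - grad (?F i) xs \<bullet> (x - xs)\<bar> \<le> ?n * ?n * M0 * norm (x - xs)^2"
        using smooth_on_imp_differentiable[OF F segU] smooth_on_imp_differentiable[OF smooth_on_pd[OF F] segU]
          M0[OF subsetD[OF seg]] by (intro taylor_remainder_bound) auto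
      then show "\<bar>(F x - F xs - jac F xs *v (x - xs)) $ i\<bar> \<le> ?n * ?n * M0 * norm (x - xs)^2"
        by (simp add: jac)
    qed
    then show "norm (F x - F xs - jac F xs *v (x - xs)) \<le> ?m * (?n * ?n * M0) * norm (x - xs)^2"
      by (simp add: mult.assoc)
  qed
qed

lemma bounded_grad_ln_on_compact:
  fixes f :: "real^'n \<Rightarrow> real"
  assumes K: "compact K" "K \<subseteq> U" and f: "smooth_on U f" and pos: "\<And>y. y \<in> U \<Longrightarrow> f y > 0"
  obtains M where "\<And>z. z \<in> K \<Longrightarrow> norm (grad (\<lambda>z. ln (f z)) z) \<le> M"
proof -
  have "continuous_on K (\<lambda>z. (1 / f z) *\<^sub>R (\<chi> i. pd i f z))"
    using K pos
    by (intro continuous_intros continuous_on_subset[OF smooth_on_imp_continuous_on[OF f]]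
        continuous_on_subset[OF smooth_on_imp_continuous_on[OF smooth_on_pd[OF f]]]) force+
  then have "bounded ((\<lambda>z. (1 / f z) *\<^sub>R (\<chi> i. pd i f z)) ` K)"
    by (intro compact_imp_bounded compact_continuous_image K)
  then obtain M where M: "\<And>z. z \<in> K \<Longrightarrow> norm ((1 / f z) *\<^sub>R (\<chi> i. pd i f z)) \<le> M"
    unfolding bounded_iff by blast
  have "grad (\<lambda>z. ln (f z)) z = (1 / f z) *\<^sub>R (\<chi> i. pd i f z)" if "z \<in> K" for z
    using grad_ln_eq[OF smooth_on_imp_differentiable[OF f] pos] that K by (auto simp: vec_eq_iff)
  with M that show ?thesis by auto
qed

section \<open>The Hamilton--Jacobi equation\<close>

lemma has_derivative_of_ln:
  fixes P :: "real^'n \<Rightarrow> real"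
  assumes U: "open U" and y: "y \<in> U" and P_pos: "\<And>z. z \<in> U \<Longrightarrow> P z > 0"
    and lnP: "\<And>z. z \<in> U \<Longrightarrow> ((\<lambda>z. ln (P z)) has_derivative (\<lambda>h. G z \<bullet> h)) (at z)"
  shows "(P has_derivative (\<lambda>h. P y * (G y \<bullet> h))) (at y)"
proof -
  have "((\<lambda>z. exp (ln (P z))) has_derivative (\<lambda>h. exp (ln (P y)) * (G y \<bullet> h))) (at y)"
    using has_derivative_compose[OF lnP[OF y] DERIV_exp[unfolded has_field_derivative_def]] .
  then have "((\<lambda>z. exp (ln (P z))) has_derivative (\<lambda>h. P y * (G y \<bullet> h))) (at y)"
    using P_pos[OF y] by simp
  then show ?thesis
    by (rule has_derivative_transform_within_open[OF _ U y]) (use P_pos y in auto)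
qed

text \<open>Stationarity \<open>div J[P] = 0\<close> divided by \<open>P\<close>, written in terms of \<open>G = \<nabla> ln P\<close>.\<close>

lemma stationary_flux_log_gradient:
  fixes P :: "real^'n \<Rightarrow> real" and G b :: "real^'n \<Rightarrow> real^'n" and D JG Ab :: "real^'n^'n"
  assumes U: "open U" and x: "x \<in> U" and P_pos: "\<And>y. y \<in> U \<Longrightarrow> P y > 0"
    and lnP: "\<And>y. y \<in> U \<Longrightarrow> ((\<lambda>z. ln (P z)) has_derivative (\<lambda>h. G y \<bullet> h)) (at y)"
    and G: "(G has_derivative (\<lambda>h. JG *v h)) (at x)"
    and b: "(b has_derivative (\<lambda>h. Ab *v h)) (at x)"
    and stationary: "divg (flux b D \<epsilon> P) x = 0"
  shows "G x \<bullet> (b x - \<epsilon> *\<^sub>R (D *v G x)) + trace (Ab - \<epsilon> *\<^sub>R (D ** JG)) = 0"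
proof -
  have P: "(P has_derivative (\<lambda>h. P y * (G y \<bullet> h))) (at y)" if "y \<in> U" for y
    by (rule has_derivative_of_ln[OF U that P_pos lnP])
  define V where "V y = b y - \<epsilon> *\<^sub>R (D *v G y)" for y
  have grad_P: "grad P y = P y *\<^sub>R G y" if "y \<in> U" for y
    by (rule grad_eqI, rule has_derivative_eq_rhs[OF P[OF that]]) simp
  have flux_eq: "flux b D \<epsilon> P y = P y *\<^sub>R V y" if "y \<in> U" for y
    using grad_P[OF that]
    by (simp add: flux_def V_def algebra_simps matrix_vector_mult_scaleR)
  have V: "(V has_derivative (\<lambda>h. Ab *v h - \<epsilon> *\<^sub>R (D *v (JG *v h)))) (at x)"
    unfolding V_def
    by (intro has_derivative_diff b has_derivative_scaleR_right
        bounded_linear.has_derivative[OF matrix_vector_mul_bounded_linear G])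
  have "(flux b D \<epsilon> P has_derivative
        (\<lambda>h. P x *\<^sub>R (Ab *v h - \<epsilon> *\<^sub>R (D *v (JG *v h))) + (P x * (G x \<bullet> h)) *\<^sub>R V x)) (at x)"
    by (rule has_derivative_transform_within_open[OF has_derivative_scaleR[OF P[OF x] V] U x])
       (simp add: flux_eq)
  then have "0 = (\<Sum>i\<in>UNIV. (P x *\<^sub>R (Ab *v axis i 1 - \<epsilon> *\<^sub>R (D *v (JG *v axis i 1)))
        + (P x * (G x \<bullet> axis i 1)) *\<^sub>R V x) $ i)"
    using stationary by (simp only: divg_def frechet_derivative_at[symmetric])
  also have "\<dots> = (\<Sum>i\<in>UNIV. P x * (Ab - \<epsilon> *\<^sub>R (D ** JG)) $ i $ i + P x * (G x $ i * V x $ i))"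
    by (intro sum.cong refl)
      (simp only: matrix_vector_mul_assoc, simp add: matrix_vector_mult_basis column_def inner_axis algebra_simps)
  also have "\<dots> = P x * (trace (Ab - \<epsilon> *\<^sub>R (D ** JG)) + G x \<bullet> V x)"
    by (simp add: trace_def inner_vec_def sum.distrib sum_distrib_left distrib_left)
  finally show ?thesis using P_pos[OF x] by (simp add: V_def add.commute)
qed

text \<open>The \<open>1/\<epsilon>\<close>-singular part of the stationarity identity must vanish on its own.\<close>

lemma hamilton_jacobi_limit:
  fixes q l bx :: "real^'n" and Q J A D :: "real^'n^'n"
    and \<rho> :: "real \<Rightarrow> real^'n" and H :: "real \<Rightarrow> real^'n^'n"
  assumes \<rho>: "(\<rho> \<longlongrightarrow> 0) (at_right 0)" and H: "(H \<longlongrightarrow> 0) (at_right 0)"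
    and eq: "\<forall>\<^sub>F \<epsilon> in at_right 0.
      (- (1/\<epsilon>) *\<^sub>R q + l + \<rho> \<epsilon>) \<bullet> (bx + D *v q - \<epsilon> *\<^sub>R (D *v (l + \<rho> \<epsilon>)))
       + trace (A + D ** Q - \<epsilon> *\<^sub>R (D ** (J + H \<epsilon>))) = 0"
  shows "q \<bullet> (bx + D *v q) = 0"
proof -
  define w where "w \<epsilon> = l + \<rho> \<epsilon>" for \<epsilon>
  define Y where "Y \<epsilon> = bx + D *v q - \<epsilon> *\<^sub>R (D *v w \<epsilon>)" for \<epsilon>
  define Z where "Z \<epsilon> = trace (A + D ** Q - \<epsilon> *\<^sub>R (D ** (J + H \<epsilon>)))" for \<epsilon>
  define E where "E \<epsilon> = - (q \<bullet> Y \<epsilon>) + \<epsilon> * (w \<epsilon> \<bullet> Y \<epsilon> + Z \<epsilon>)" for \<epsilon>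
  have "(E \<longlongrightarrow> - (q \<bullet> (bx + D *v q - 0 *\<^sub>R (D *v (l + 0)))) + 0 * ((l + 0) \<bullet> (bx + D *v q - 0 *\<^sub>R (D *v (l + 0)))
        + trace (A + D ** Q - 0 *\<^sub>R (D ** (J + 0))))) (at_right 0)"
    unfolding E_def Y_def Z_def w_def by (intro tendsto_intros \<rho> H)
  then have lim: "(E \<longlongrightarrow> - (q \<bullet> (bx + D *v q))) (at_right 0)"
    by (rule tendsto_eq_rhs) simp
  have "\<forall>\<^sub>F \<epsilon> in at_right 0. E \<epsilon> = 0"
    using eq eventually_at_right_less[of 0]
  proof eventually_elim
    case (elim \<epsilon>)
    then have "(- (1/\<epsilon>) *\<^sub>R q + w \<epsilon>) \<bullet> Y \<epsilon> + Z \<epsilon> = 0"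
      by (simp only: Y_def Z_def w_def add.assoc)
    then have "\<epsilon> * (- (1/\<epsilon>) * (q \<bullet> Y \<epsilon>) + (w \<epsilon> \<bullet> Y \<epsilon> + Z \<epsilon>)) = 0"
      by (simp only: inner_add_left inner_scaleR_left add.assoc mult_zero_right)
    then show ?case
      using elim(2) by (simp only: E_def distrib_left) (simp add: field_simps)
  qed
  then have "((\<lambda>_. 0) \<longlongrightarrow> - (q \<bullet> (bx + D *v q))) (at_right (0::real))"
    by (rule Lim_transform_eventually[OF lim])
  then show ?thesis
    using tendsto_unique[OF trivial_limit_at_right_real _ tendsto_const] by fastforce
qed

lemma has_derivative_ln_wkb:
  fixes \<phi> \<omega> R P :: "real^'n \<Rightarrow> real"
  assumes U: "open U" and y: "y \<in> U"
    and \<phi>: "smooth_on U \<phi>" and \<omega>: "smooth_on U \<omega>" and \<omega>_pos: "\<And>z. z \<in> U \<Longrightarrow> \<omega> z > 0"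
    and R: "smooth_on U R" and P_pos: "P y > 0"
    and wkb: "\<And>z. z \<in> U \<Longrightarrow> P z = a * exp (- \<phi> z / \<epsilon> + ln (\<omega> z) + R z)"
  shows "((\<lambda>z. ln (P z)) has_derivative
    (\<lambda>h. (- (1/\<epsilon>) *\<^sub>R grad \<phi> y + grad (\<lambda>z. ln (\<omega> z)) y + grad R y) \<bullet> h)) (at y)"
proof -
  have a: "a > 0" using P_pos wkb[OF y] by (simp add: zero_less_mult_iff)
  have "(\<lambda>z. ln (\<omega> z)) differentiable (at y)"
    using has_derivative_ln_grad[OF smooth_on_imp_differentiable[OF \<omega> y] \<omega>_pos[OF y]] by (rule differentiableI)
  then have "((\<lambda>z. ln a + (- (1/\<epsilon>) * \<phi> z + ln (\<omega> z) + R z)) has_derivative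
      (\<lambda>h. 0 + (- (1/\<epsilon>) * (grad \<phi> y \<bullet> h) + grad (\<lambda>z. ln (\<omega> z)) y \<bullet> h + grad R y \<bullet> h))) (at y)"
    using smooth_on_imp_differentiable[OF \<phi> y] smooth_on_imp_differentiable[OF R y]
    by (intro has_derivative_add has_derivative_const has_derivative_mult_right has_derivative_grad)
  then have "((\<lambda>z. ln (P z)) has_derivative
      (\<lambda>h. 0 + (- (1/\<epsilon>) * (grad \<phi> y \<bullet> h) + grad (\<lambda>z. ln (\<omega> z)) y \<bullet> h + grad R y \<bullet> h))) (at y)"
    by (rule has_derivative_transform_within_open[OF _ U y]) (use a in \<open>simp add: wkb ln_mult divide_inverse\<close>)
  then show ?thesis
    by (rule has_derivative_eq_rhs) (simp add: fun_eq_iff inner_add_left inner_diff_left)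
qed

lemma grad_ln_wkb:
  fixes \<phi> \<omega> R P :: "real^'n \<Rightarrow> real"
  assumes "open U" "y \<in> U" "smooth_on U \<phi>" "smooth_on U \<omega>" "\<And>z. z \<in> U \<Longrightarrow> \<omega> z > 0"
    "smooth_on U R" "P y > 0" "\<And>z. z \<in> U \<Longrightarrow> P z = a * exp (- \<phi> z / \<epsilon> + ln (\<omega> z) + R z)"
  shows "grad (\<lambda>z. ln (P z)) y = - (1/\<epsilon>) *\<^sub>R grad \<phi> y + grad (\<lambda>z. ln (\<omega> z)) y + grad R y"
  by (rule grad_eqI[OF has_derivative_ln_wkb[OF assms]])

lemma stationary_wkb_identity:
  fixes P \<phi> \<omega> R :: "real^'n \<Rightarrow> real" and b :: "real^'n \<Rightarrow> real^'n" and D Ab :: "real^'n^'n"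
  assumes b: "(b has_derivative (\<lambda>h. Ab *v h)) (at x)"
    and P_pos: "\<And>y. y \<in> U \<Longrightarrow> P y > 0"
    and stationary: "divg (flux b D \<epsilon> P) x = 0"
    and U: "open U" and x: "x \<in> U" and \<phi>: "smooth_on U \<phi>"
    and \<omega>: "smooth_on U \<omega>" and \<omega>_pos: "\<And>y. y \<in> U \<Longrightarrow> \<omega> y > 0" and R: "smooth_on U R"
    and wkb: "\<And>y. y \<in> U \<Longrightarrow> P y = a * exp (- \<phi> y / \<epsilon> + ln (\<omega> y) + R y)"
    and \<epsilon>: "\<epsilon> \<noteq> 0"
  shows "(- (1/\<epsilon>) *\<^sub>R grad \<phi> x + grad (\<lambda>z. ln (\<omega> z)) x + grad R x)
        \<bullet> (b x + D *v grad \<phi> x - \<epsilon> *\<^sub>R (D *v (grad (\<lambda>z. ln (\<omega> z)) x + grad R x)))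
      + trace (Ab + D ** hess \<phi> x - \<epsilon> *\<^sub>R (D ** (hess (\<lambda>z. ln (\<omega> z)) x + hess R x))) = 0"
proof -
  define L where "L = (\<lambda>z. ln (\<omega> z))"
  define G where "G y = - (1/\<epsilon>) *\<^sub>R grad \<phi> y + grad L y + grad R y" for y
  define JG where "JG = - (1/\<epsilon>) *\<^sub>R hess \<phi> x + hess L x + hess R x"
  have lnP: "((\<lambda>z. ln (P z)) has_derivative (\<lambda>h. G y \<bullet> h)) (at y)" if "y \<in> U" for y
    unfolding G_def L_def using has_derivative_ln_wkb[OF U that \<phi> \<omega> \<omega>_pos R P_pos[OF that] wkb] .
  have "(G has_derivative (\<lambda>h. - (1/\<epsilon>) *\<^sub>R (hess \<phi> x *v h) + hess L x *v h + hess R x *v h)) (at x)"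
    unfolding G_def L_def
    using smooth_on_imp_differentiable[OF smooth_on_pd[OF \<phi>] x] smooth_on_imp_differentiable[OF smooth_on_pd[OF R] x]
    by (intro has_derivative_add has_derivative_scaleR_right has_derivative_grad_hess
        has_derivative_grad_ln_hess[OF U \<omega> \<omega>_pos x])
  then have "(G has_derivative (\<lambda>h. JG *v h)) (at x)"
    by (rule has_derivative_eq_rhs)
      (simp add: JG_def fun_eq_iff vec_eq_iff matrix_vector_mult_def sum.distrib sum_subtractf
        sum_divide_distrib algebra_simps)
  from stationary_flux_log_gradient[OF U x P_pos lnP this b stationary]
  have flux: "G x \<bullet> (b x - \<epsilon> *\<^sub>R (D *v G x)) + trace (Ab - \<epsilon> *\<^sub>R (D ** JG)) = 0" .
  have drift: "b x - \<epsilon> *\<^sub>R (D *v G x) = b x + D *v grad \<phi> x - \<epsilon> *\<^sub>R (D *v (grad L x + grad R x))"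
    using \<epsilon> by (simp add: G_def algebra_simps matrix_vector_right_distrib matrix_vector_mult_scaleR)
  have divergence: "Ab - \<epsilon> *\<^sub>R (D ** JG) = Ab + D ** hess \<phi> x - \<epsilon> *\<^sub>R (D ** (hess L x + hess R x))"
    using \<epsilon> by (simp add: JG_def matrix_add_ldistrib matrix_diff_ldistrib matrix_scaleR_right algebra_simps)
  show ?thesis using flux unfolding drift divergence by (simp only: G_def L_def)
qed

lemma hamilton_jacobi:
  fixes b :: "real^'n \<Rightarrow> real^'n" and A :: "real^'n \<Rightarrow> real^'n^'n" and D :: "real^'n^'n"
    and \<pi> :: "real \<Rightarrow> real^'n \<Rightarrow> real" and ahat :: "real \<Rightarrow> real"
    and \<phi> \<omega> :: "real^'n \<Rightarrow> real" and R :: "real \<Rightarrow> real^'n \<Rightarrow> real"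
  assumes A_jac: "\<And>x. (b has_derivative (\<lambda>h. A x *v h)) (at x)"
    and \<pi>_pos: "\<And>\<epsilon> x. \<epsilon> > 0 \<Longrightarrow> \<pi> \<epsilon> x > 0"
    and stationary: "\<And>\<epsilon> x. \<epsilon> > 0 \<Longrightarrow> divg (flux b D \<epsilon> (\<pi> \<epsilon>)) x = 0"
    and U: "open U" and \<phi>: "smooth_on U \<phi>"
    and \<omega>: "smooth_on U \<omega>" and \<omega>_pos: "\<And>x. x \<in> U \<Longrightarrow> \<omega> x > 0"
    and R: "\<And>\<epsilon>. \<epsilon> > 0 \<Longrightarrow> smooth_on U (R \<epsilon>)"
    and wkb: "\<And>\<epsilon> x. \<epsilon> > 0 \<Longrightarrow> x \<in> U \<Longrightarrow>
               \<pi> \<epsilon> x = ahat \<epsilon> * exp (- \<phi> x / \<epsilon> + ln (\<omega> x) + R \<epsilon> x)"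
    and e0: "e0 > 0"
    and R_small: "\<And>\<epsilon> x. 0 < \<epsilon> \<Longrightarrow> \<epsilon> < e0 \<Longrightarrow> x \<in> U \<Longrightarrow>
               norm (grad (R \<epsilon>) x) \<le> K * \<epsilon> \<and> norm (hess (R \<epsilon>) x) \<le> K * \<epsilon>"
    and x: "x \<in> U"
  shows "grad \<phi> x \<bullet> (b x + D *v grad \<phi> x) = 0"
proof (rule hamilton_jacobi_limit)
  have small: "\<forall>\<^sub>F \<epsilon> in at_right 0. norm (grad (R \<epsilon>) x) \<le> K * \<epsilon> \<and> norm (hess (R \<epsilon>) x) \<le> K * \<epsilon>"
    using eventually_at_right_real[OF e0] by eventually_elim (use R_small x in auto)
  have K_lim: "((\<lambda>\<epsilon>. K * \<epsilon>) \<longlongrightarrow> 0) (at_right 0)"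
    by (auto intro!: tendsto_eq_intros)
  show "((\<lambda>\<epsilon>. grad (R \<epsilon>) x) \<longlongrightarrow> 0) (at_right 0)" "((\<lambda>\<epsilon>. hess (R \<epsilon>) x) \<longlongrightarrow> 0) (at_right 0)"
    using small by (auto intro!: Lim_null_comparison[OF _ K_lim] elim: eventually_mono)
  show "\<forall>\<^sub>F \<epsilon> in at_right 0.
      (- (1/\<epsilon>) *\<^sub>R grad \<phi> x + grad (\<lambda>z. ln (\<omega> z)) x + grad (R \<epsilon>) x)
        \<bullet> (b x + D *v grad \<phi> x - \<epsilon> *\<^sub>R (D *v (grad (\<lambda>z. ln (\<omega> z)) x + grad (R \<epsilon>) x)))
      + trace (A x + D ** hess \<phi> x - \<epsilon> *\<^sub>R (D ** (hess (\<lambda>z. ln (\<omega> z)) x + hess (R \<epsilon>) x))) = 0"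
    using eventually_at_right_less[of 0]
    by eventually_elim
      (intro stationary_wkb_identity[OF A_jac \<pi>_pos stationary U x \<phi> \<omega> \<omega>_pos R wkb]; simp)
qed

section \<open>The Riccati equation along the limit cycle\<close>

lemma pd_pd_sum_mult_vanishing:
  fixes g W :: "'i::finite \<Rightarrow> real^'n \<Rightarrow> real"
  assumes U: "open U" and x0: "x0 \<in> U"
    and vanish: "\<And>y. y \<in> U \<Longrightarrow> (\<Sum>i\<in>UNIV. g i y * W i y) = 0"
    and zero: "\<And>i. g i x0 = 0"
    and dg: "\<And>i y. y \<in> U \<Longrightarrow> g i differentiable (at y)"
      "\<And>i y. y \<in> U \<Longrightarrow> pd l (g i) differentiable (at y)"
    and dW: "\<And>i y. y \<in> U \<Longrightarrow> W i differentiable (at y)"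
      "\<And>i y. y \<in> U \<Longrightarrow> pd l (W i) differentiable (at y)"
  shows "(\<Sum>i\<in>UNIV. pd k (pd l (g i)) x0 * W i x0 + pd l (g i) x0 * pd k (W i) x0
      + pd k (g i) x0 * pd l (W i) x0) = 0"
proof -
  have first: "(\<Sum>i\<in>UNIV. pd l (g i) y * W i y + g i y * pd l (W i) y) = 0" if y: "y \<in> U" for y
  proof -
    have "pd l (\<lambda>y. \<Sum>i\<in>UNIV. g i y * W i y) y = 0" by (rule pd_eq_0_open[OF U y vanish])
    then show ?thesis by (simp add: pd_sum pd_mult dg dW y differentiable_mult)
  qed
  have "0 = pd k (\<lambda>y. \<Sum>i\<in>UNIV. pd l (g i) y * W i y + g i y * pd l (W i) y) x0"
    by (rule pd_eq_0_open[OF U x0 first, symmetric])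
  also have "\<dots> = (\<Sum>i\<in>UNIV. pd k (pd l (g i)) x0 * W i x0 + pd l (g i) x0 * pd k (W i) x0
      + pd k (g i) x0 * pd l (W i) x0)"
    by (simp add: pd_sum pd_add pd_mult dg dW x0 differentiable_mult differentiable_add zero add.assoc)
  finally show ?thesis by simp
qed

lemma riccati_of_entries:
  fixes H A D T :: "real^'n^'n"
  assumes H: "transpose H = H" and D: "transpose D = D"
    and entries: "\<And>l k. T $ l $ k + (\<Sum>i\<in>UNIV. H $ i $ l * (A + D ** H) $ i $ k
      + H $ i $ k * (A + D ** H) $ i $ l) = 0"
  shows "T = - (H ** A) - transpose A ** H - 2 *\<^sub>R (H ** D ** H)"
proof -
  let ?M = "A + D ** H"
  have "T = - (transpose H ** ?M) - transpose ?M ** H"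
    using entries
    by (simp add: vec_eq_iff matrix_matrix_mult_def transpose_def sum.distrib algebra_simps
        eq_neg_iff_add_eq_0 mult.commute)
  also have "\<dots> = - (H ** A) - transpose A ** H - 2 *\<^sub>R (H ** D ** H)"
    using H D by (simp add: matrix_add_ldistrib matrix_add_rdistrib transpose_add matrix_transpose_mul
        matrix_mul_assoc scaleR_2 algebra_simps)
  finally show ?thesis .
qed

text \<open>Differentiate the Hamilton--Jacobi equation twice at a critical point of \<open>\<phi>\<close>: the third
  derivatives of \<open>\<phi>\<close> survive only contracted with \<open>b\<close>, i.e.\ as the derivative of the Hessian along
  the flow.\<close>

lemma hamilton_jacobi_riccati:
  fixes b :: "real^'n \<Rightarrow> real^'n" and A :: "real^'n \<Rightarrow> real^'n^'n" and \<phi> :: "real^'n \<Rightarrow> real"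
  assumes b_smooth: "smooth_vec_on UNIV b"
    and A_jac: "\<And>x. (b has_derivative (\<lambda>h. A x *v h)) (at x)"
    and D_sym: "transpose D = D"
    and U: "open U" and \<phi>_smooth: "smooth_on U \<phi>"
    and HJ: "\<And>y. y \<in> U \<Longrightarrow> grad \<phi> y \<bullet> (b y + D *v grad \<phi> y) = 0"
    and x0: "x0 \<in> U" and crit: "grad \<phi> x0 = 0"
  shows "(\<chi> l k. \<Sum>i\<in>UNIV. b x0 $ i * pd i (pd k (pd l \<phi>)) x0)
     = - (hess \<phi> x0 ** A x0) - transpose (A x0) ** hess \<phi> x0 - 2 *\<^sub>R (hess \<phi> x0 ** D ** hess \<phi> x0)"
proof -
  define H where "H = hess \<phi> x0"
  define g where "g i = pd i \<phi>" for i
  define W where "W i y = b y $ i + (\<Sum>j\<in>UNIV. D $ i $ j * g j y)" for i y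
  have sb: "smooth_on UNIV (\<lambda>y. b y $ i)" for i using b_smooth by (simp add: smooth_vec_on_def)
  have db: "(\<lambda>y. b y $ i) differentiable (at y)" "pd l (\<lambda>y. b y $ i) differentiable (at y)" for i l y
    using sb by (auto intro: smooth_on_imp_differentiable smooth_on_pd)
  have dg: "g i differentiable (at y)" "pd l (g i) differentiable (at y)" if "y \<in> U" for i l y
    unfolding g_def using \<phi>_smooth that by (auto intro: smooth_on_imp_differentiable smooth_on_pd)
  have dW: "W i differentiable (at y)" if "y \<in> U" for i y
    unfolding W_def[abs_def] using db dg that by (intro derivative_intros) auto
  have pdW: "pd l (W i) y = pd l (\<lambda>y. b y $ i) y + (\<Sum>j\<in>UNIV. D $ i $ j * pd l (g j) y)"
    if "y \<in> U" for i l y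
    unfolding W_def[abs_def] using db dg that
    by (simp add: pd_add pd_sum pd_cmult derivative_intros)
  have dpdW: "pd l (W i) differentiable (at y)" if y: "y \<in> U" for i l y
  proof (rule differentiable_cong_open[OF U y])
    show "pd l (W i) z = pd l (\<lambda>y. b y $ i) z + (\<Sum>j\<in>UNIV. D $ i $ j * pd l (g j) z)"
      if "z \<in> U" for z
      using pdW[OF that] .
    show "(\<lambda>z. pd l (\<lambda>y. b y $ i) z + (\<Sum>j\<in>UNIV. D $ i $ j * pd l (g j) z)) differentiable (at y)"
      using db dg y by (intro derivative_intros) auto
  qed
  have g0: "g i x0 = 0" for i using crit by (simp add: g_def vec_eq_iff)
  have Hg: "H $ i $ j = pd j (g i) x0" for i j
    unfolding H_def g_def using dg(1) x0 by (simp add: g_def hess_nth)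
  have vanish: "(\<Sum>i\<in>UNIV. g i y * W i y) = 0" if "y \<in> U" for y
    using HJ[OF that] by (simp add: inner_vec_def matrix_vector_mult_def g_def W_def)
  have entries: "(\<chi> l k. \<Sum>i\<in>UNIV. b x0 $ i * pd i (pd k (pd l \<phi>)) x0) $ l $ k
      + (\<Sum>i\<in>UNIV. H $ i $ l * (A x0 + D ** H) $ i $ k + H $ i $ k * (A x0 + D ** H) $ i $ l) = 0" for l k
  proof -
    have pdW0: "pd k (W i) x0 = (A x0 + D ** H) $ i $ k" for i k
      using pdW[OF x0] pd_vec_nth_eq_matrix[OF A_jac] by (simp add: matrix_matrix_mult_def Hg)
    show ?thesis
      using pd_pd_sum_mult_vanishing[OF U x0 vanish g0 dg dW dpdW, of k l]
      by (simp add: g_def smooth_on_pd_pd_pd_commute[OF U x0 \<phi>_smooth] pdW0 Hg[unfolded g_def] W_def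
          g0[unfolded g_def] sum.distrib mult.commute add_ac)
  qed
  show ?thesis
    using riccati_of_entries[OF hess_symmetric[OF U x0 \<phi>_smooth, folded H_def] D_sym entries]
    by (simp add: H_def)
qed

lemma has_vector_derivative_hess_comp:
  fixes \<phi> :: "real^'n \<Rightarrow> real" and xs :: "real \<Rightarrow> real^'n"
  assumes \<phi>_smooth: "smooth_on U \<phi>" and inU: "\<And>s. xs s \<in> U"
    and xs: "(xs has_vector_derivative v) (at t)"
  shows "((\<lambda>s. hess \<phi> (xs s)) has_vector_derivative
      (\<chi> l k. \<Sum>i\<in>UNIV. v $ i * pd i (pd k (pd l \<phi>)) (xs t))) (at t)"
proof -
  have hess_eq: "hess \<phi> (xs s) = (\<chi> l k. pd k (pd l \<phi>) (xs s))" for s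
    using smooth_on_imp_differentiable[OF smooth_on_pd[OF \<phi>_smooth] inU]
    by (simp add: vec_eq_iff hess_nth)
  have rows: "((\<lambda>y. \<chi> k. pd k (pd l \<phi>) y) has_derivative
      (\<lambda>h. \<chi> k. grad (pd k (pd l \<phi>)) (xs t) \<bullet> h)) (at (xs t))" for l
    using smooth_on_imp_differentiable[OF smooth_on_pd[OF smooth_on_pd[OF \<phi>_smooth]] inU]
    by (intro has_derivative_vec_lambda) (simp add: has_derivative_grad)
  have "((\<lambda>y. \<chi> l k. pd k (pd l \<phi>) y) has_derivative
      (\<lambda>h. \<chi> l k. grad (pd k (pd l \<phi>)) (xs t) \<bullet> h)) (at (xs t))"
    by (rule has_derivative_vec_lambda) (simp add: rows)
  from has_derivative_compose[OF xs[unfolded has_vector_derivative_def] this]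
  show ?thesis
    unfolding hess_eq has_vector_derivative_def
    by (simp add: vec_eq_iff inner_vec_def sum_distrib_left scaleR_vec_def mult_ac)
qed

lemma hess_riccati_along_trajectory:
  fixes b :: "real^'n \<Rightarrow> real^'n" and A :: "real^'n \<Rightarrow> real^'n^'n" and \<phi> :: "real^'n \<Rightarrow> real"
    and xs :: "real \<Rightarrow> real^'n"
  assumes b_smooth: "smooth_vec_on UNIV b"
    and A_jac: "\<And>x. (b has_derivative (\<lambda>h. A x *v h)) (at x)"
    and D_sym: "transpose D = D"
    and U: "open U" and \<phi>_smooth: "smooth_on U \<phi>"
    and HJ: "\<And>y. y \<in> U \<Longrightarrow> grad \<phi> y \<bullet> (b y + D *v grad \<phi> y) = 0"
    and \<Gamma>: "\<Gamma> \<subseteq> U" and crit: "\<And>x. x \<in> \<Gamma> \<Longrightarrow> grad \<phi> x = 0"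
    and xs_\<Gamma>: "\<And>t. xs t \<in> \<Gamma>" and xs: "\<And>t. (xs has_vector_derivative b (xs t)) (at t)"
  shows "((\<lambda>s. hess \<phi> (xs s)) has_vector_derivative
      (- (hess \<phi> (xs t) ** A (xs t)) - transpose (A (xs t)) ** hess \<phi> (xs t)
       - 2 *\<^sub>R (hess \<phi> (xs t) ** D ** hess \<phi> (xs t)))) (at t)"
proof -
  have inU: "xs s \<in> U" for s using xs_\<Gamma> \<Gamma> by blast
  from hamilton_jacobi_riccati[OF b_smooth A_jac D_sym U \<phi>_smooth HJ inU crit[OF xs_\<Gamma>]]
    has_vector_derivative_hess_comp[OF \<phi>_smooth inU xs]
  show ?thesis by simp
qed

section \<open>Linearisation of the drift\<close>

lemma gammaf_wkb_decomposition:
  fixes \<phi> \<omega> R P :: "real^'n \<Rightarrow> real" and b :: "real^'n \<Rightarrow> real^'n"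
  assumes "open U" "x \<in> U" "smooth_on U \<phi>" "smooth_on U \<omega>" "\<And>z. z \<in> U \<Longrightarrow> \<omega> z > 0"
    "smooth_on U R" "P x > 0" "\<And>z. z \<in> U \<Longrightarrow> P z = a * exp (- \<phi> z / \<epsilon> + ln (\<omega> z) + R z)"
    and \<epsilon>: "\<epsilon> \<noteq> 0"
  shows "gammaf b D \<epsilon> P x - (b xs + (A + D ** H) *v (x - xs))
    = (b x - b xs - A *v (x - xs)) + D *v (grad \<phi> x - H *v (x - xs))
      - \<epsilon> *\<^sub>R (D *v (grad (\<lambda>z. ln (\<omega> z)) x + grad R x))"
  using \<epsilon>
  by (simp add: gammaf_def grad_ln_wkb[OF assms(1-8)] matrix_vector_mult_add_rdistrib
      matrix_vector_mul_assoc[symmetric] matrix_vector_right_distrib matrix_vector_mult_diff_distrib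
      matrix_vector_mult_scaleR scaleR_right_distrib algebra_simps)

lemma taylor_bounds_near_compact:
  fixes b :: "real^'n \<Rightarrow> real^'n" and A :: "real^'n \<Rightarrow> real^'n^'n" and \<phi> \<omega> :: "real^'n \<Rightarrow> real"
  assumes b_smooth: "smooth_vec_on UNIV b"
    and A_jac: "\<And>x. (b has_derivative (\<lambda>h. A x *v h)) (at x)"
    and U: "open U" and \<Gamma>: "compact \<Gamma>" "\<Gamma> \<subseteq> U"
    and \<phi>: "smooth_on U \<phi>" and \<omega>: "smooth_on U \<omega>" and \<omega>_pos: "\<And>x. x \<in> U \<Longrightarrow> \<omega> x > 0"
    and \<phi>_crit: "\<And>x. x \<in> \<Gamma> \<Longrightarrow> grad \<phi> x = 0"
  obtains \<delta> Mb Mp Mln where "\<delta> > 0"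
    and "\<And>xs x. xs \<in> \<Gamma> \<Longrightarrow> norm (x - xs) \<le> \<delta> \<Longrightarrow> x \<in> U \<and>
      norm (b x - b xs - A xs *v (x - xs)) \<le> Mb * norm (x - xs)^2 \<and>
      norm (grad \<phi> x - hess \<phi> xs *v (x - xs)) \<le> Mp * norm (x - xs)^2 \<and>
      norm (grad (\<lambda>z. ln (\<omega> z)) x) \<le> Mln"
proof -
  obtain \<delta> where \<delta>: "\<delta> > 0" and N: "(\<Union>x\<in>\<Gamma>. cball x \<delta>) \<subseteq> U"
    using compact_subset_open_imp_cball_epsilon_subset[OF \<Gamma>(1) U \<Gamma>(2)] by blast
  have "smooth_on UNIV (\<lambda>y. b y $ i)" for i using b_smooth by (simp add: smooth_vec_on_def)
  then obtain Mb where Mb: "\<And>xs x. xs \<in> \<Gamma> \<Longrightarrow> norm (x - xs) \<le> \<delta> \<Longrightarrow>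
      norm (b x - b xs - jac b xs *v (x - xs)) \<le> Mb * norm (x - xs)^2"
    by (rule uniform_taylor_bound[OF \<Gamma>(1) subset_UNIV[of "\<Union>x\<in>\<Gamma>. cball x \<delta>"]]) blast
  have "smooth_on U (\<lambda>y. grad \<phi> y $ i)" for i using smooth_on_pd[OF \<phi>] by simp
  then obtain Mp where Mp: "\<And>xs x. xs \<in> \<Gamma> \<Longrightarrow> norm (x - xs) \<le> \<delta> \<Longrightarrow>
      norm (grad \<phi> x - grad \<phi> xs - jac (grad \<phi>) xs *v (x - xs)) \<le> Mp * norm (x - xs)^2"
    by (rule uniform_taylor_bound[OF \<Gamma>(1) N]) blast
  obtain Mln where Mln: "\<And>z. z \<in> (\<Union>x\<in>\<Gamma>. cball x \<delta>) \<Longrightarrow> norm (grad (\<lambda>z. ln (\<omega> z)) z) \<le> Mln"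
    using bounded_grad_ln_on_compact[OF compact_Union_cball[OF \<Gamma>(1)] N \<omega> \<omega>_pos] by blast
  show ?thesis
  proof (rule that[OF \<delta>])
    fix xs x assume xs: "xs \<in> \<Gamma>" and x: "norm (x - xs) \<le> \<delta>"
    have "x \<in> (\<Union>x\<in>\<Gamma>. cball x \<delta>)"
      using xs x by (auto simp: dist_norm norm_minus_commute)
    then show "x \<in> U \<and> norm (b x - b xs - A xs *v (x - xs)) \<le> Mb * norm (x - xs)^2 \<and>
      norm (grad \<phi> x - hess \<phi> xs *v (x - xs)) \<le> Mp * norm (x - xs)^2 \<and>
      norm (grad (\<lambda>z. ln (\<omega> z)) x) \<le> Mln"
      using N Mln Mb[OF xs x, unfolded jac_eqI[OF A_jac]]
        Mp[OF xs x, folded hess_def, unfolded \<phi>_crit[OF xs] diff_zero] by blast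
  qed
qed

lemma gamma_expansion:
  fixes b :: "real^'n \<Rightarrow> real^'n" and A :: "real^'n \<Rightarrow> real^'n^'n"
    and D :: "real^'n^'n" and \<Gamma> U :: "(real^'n) set"
    and \<pi> :: "real \<Rightarrow> real^'n \<Rightarrow> real" and ahat :: "real \<Rightarrow> real"
    and \<phi> \<omega> :: "real^'n \<Rightarrow> real" and R :: "real \<Rightarrow> real^'n \<Rightarrow> real"
  assumes b_smooth: "smooth_vec_on UNIV b"
    and A_jac: "\<And>x. (b has_derivative (\<lambda>h. A x *v h)) (at x)"
    and \<pi>_pos: "\<And>\<epsilon> x. \<epsilon> > 0 \<Longrightarrow> \<pi> \<epsilon> x > 0"
    and U: "open U" and \<Gamma>: "compact \<Gamma>" "\<Gamma> \<subseteq> U"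
    and \<phi>: "smooth_on U \<phi>" and \<omega>: "smooth_on U \<omega>" and \<omega>_pos: "\<And>x. x \<in> U \<Longrightarrow> \<omega> x > 0"
    and R: "\<And>\<epsilon>. \<epsilon> > 0 \<Longrightarrow> smooth_on U (R \<epsilon>)"
    and wkb: "\<And>\<epsilon> x. \<epsilon> > 0 \<Longrightarrow> x \<in> U \<Longrightarrow>
               \<pi> \<epsilon> x = ahat \<epsilon> * exp (- \<phi> x / \<epsilon> + ln (\<omega> x) + R \<epsilon> x)"
    and e0: "e0 > 0"
    and R_small: "\<And>\<epsilon> x. 0 < \<epsilon> \<Longrightarrow> \<epsilon> < e0 \<Longrightarrow> x \<in> U \<Longrightarrow> norm (grad (R \<epsilon>) x) \<le> KR * \<epsilon>"
    and \<phi>_crit: "\<And>x. x \<in> \<Gamma> \<Longrightarrow> grad \<phi> x = 0"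
    and C: "C > 0"
  shows "\<exists>K \<epsilon>0. \<epsilon>0 > 0 \<and> (\<forall>\<epsilon> xs x. 0 < \<epsilon> \<and> \<epsilon> < \<epsilon>0 \<and> xs \<in> \<Gamma> \<and>
              norm (x - xs) \<le> C * sqrt \<epsilon> \<longrightarrow>
              norm (gammaf b D \<epsilon> (\<pi> \<epsilon>) x
                    - (b xs + (A xs + D ** hess \<phi> xs) *v (x - xs))) \<le> K * \<epsilon>)"
proof -
  obtain \<delta> Mb Mp Mln where \<delta>: "\<delta> > 0" and bounds: "\<And>xs x. xs \<in> \<Gamma> \<Longrightarrow> norm (x - xs) \<le> \<delta> \<Longrightarrow> x \<in> U \<and>
      norm (b x - b xs - A xs *v (x - xs)) \<le> Mb * norm (x - xs)^2 \<and>
      norm (grad \<phi> x - hess \<phi> xs *v (x - xs)) \<le> Mp * norm (x - xs)^2 \<and>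
      norm (grad (\<lambda>z. ln (\<omega> z)) x) \<le> Mln"
    using taylor_bounds_near_compact[OF b_smooth A_jac U \<Gamma> \<phi> \<omega> \<omega>_pos \<phi>_crit] by blast
  define nD where "nD = onorm ((*v) D)"
  have D_le: "norm (D *v v) \<le> nD * norm v" for v
    unfolding nD_def by (rule onorm[OF matrix_vector_mul_bounded_linear])
  have nD: "nD \<ge> 0" unfolding nD_def by (rule onorm_pos_le[OF matrix_vector_mul_bounded_linear])
  define K where "K = \<bar>Mb\<bar> * C^2 + nD * (\<bar>Mp\<bar> * C^2) + nD * (\<bar>Mln\<bar> + \<bar>KR\<bar>)"
  show ?thesis
  proof (rule exI[of _ K], rule exI[of _ "min (min e0 1) ((\<delta> / C)^2)"], intro conjI allI impI)
    show "min (min e0 1) ((\<delta> / C)^2) > 0" using e0 \<delta> C by simp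
    fix \<epsilon> xs x
    assume "0 < \<epsilon> \<and> \<epsilon> < min (min e0 1) ((\<delta> / C)^2) \<and> xs \<in> \<Gamma> \<and> norm (x - xs) \<le> C * sqrt \<epsilon>"
    then have \<epsilon>: "0 < \<epsilon>" "\<epsilon> < e0" "\<epsilon> < 1" "\<epsilon> < (\<delta> / C)^2" and xs: "xs \<in> \<Gamma>"
      and h: "norm (x - xs) \<le> C * sqrt \<epsilon>" by auto
    have "sqrt \<epsilon> < \<delta> / C"
      using real_sqrt_less_mono[OF \<epsilon>(4)] \<delta> C by simp
    with h C have "norm (x - xs) \<le> \<delta>" by (simp add: field_simps)
    note bounds = bounds[OF xs this]
    have h2: "norm (x - xs)^2 \<le> C^2 * \<epsilon>"
      using power_mono[OF h norm_ge_zero, of 2] \<epsilon>(1) by (simp add: power_mult_distrib)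
    have quadratic: "M * norm (x - xs)^2 \<le> \<bar>M\<bar> * C^2 * \<epsilon>" for M
    proof -
      have "M * norm (x - xs)^2 \<le> \<bar>M\<bar> * (C^2 * \<epsilon>)" by (intro mult_mono abs_ge_self h2) auto
      then show ?thesis by (simp add: mult.assoc)
    qed
    let ?a = "b x - b xs - A xs *v (x - xs)" and ?b = "D *v (grad \<phi> x - hess \<phi> xs *v (x - xs))"
      and ?c = "\<epsilon> *\<^sub>R (D *v (grad (\<lambda>z. ln (\<omega> z)) x + grad (R \<epsilon>) x))"
    have a: "norm ?a \<le> \<bar>Mb\<bar> * C^2 * \<epsilon>"
      using bounds quadratic[of Mb] by linarith
    have "nD * norm (grad \<phi> x - hess \<phi> xs *v (x - xs)) \<le> nD * (\<bar>Mp\<bar> * C^2 * \<epsilon>)"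
      using bounds quadratic[of Mp] nD by (intro mult_left_mono) linarith+
    then have b: "norm ?b \<le> nD * (\<bar>Mp\<bar> * C^2) * \<epsilon>"
      using D_le[of "grad \<phi> x - hess \<phi> xs *v (x - xs)"] by (simp add: mult.assoc)
    have "KR * \<epsilon> \<le> \<bar>KR\<bar> * \<epsilon>" using \<epsilon>(1) by (intro mult_right_mono) auto
    also have "\<dots> \<le> \<bar>KR\<bar>" using \<epsilon>(1,3) by (intro mult_left_le) auto
    finally have "norm (grad (\<lambda>z. ln (\<omega> z)) x + grad (R \<epsilon>) x) \<le> \<bar>Mln\<bar> + \<bar>KR\<bar>"
      using bounds R_small[OF \<epsilon>(1,2)] norm_triangle_ineq[of "grad (\<lambda>z. ln (\<omega> z)) x" "grad (R \<epsilon>) x"]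
        abs_ge_self[of Mln] by fastforce
    then have "nD * norm (grad (\<lambda>z. ln (\<omega> z)) x + grad (R \<epsilon>) x) \<le> nD * (\<bar>Mln\<bar> + \<bar>KR\<bar>)"
      using nD by (rule mult_left_mono)
    then have "norm (D *v (grad (\<lambda>z. ln (\<omega> z)) x + grad (R \<epsilon>) x)) \<le> nD * (\<bar>Mln\<bar> + \<bar>KR\<bar>)"
      using D_le[of "grad (\<lambda>z. ln (\<omega> z)) x + grad (R \<epsilon>) x"] by linarith
    then have c: "norm ?c \<le> nD * (\<bar>Mln\<bar> + \<bar>KR\<bar>) * \<epsilon>"
      using \<epsilon>(1) by (simp add: mult.commute mult_left_mono)
    have "\<epsilon> \<noteq> 0" using \<epsilon>(1) by simp
    from gammaf_wkb_decomposition[OF U conjunct1[OF bounds] \<phi> \<omega> \<omega>_pos R[OF \<epsilon>(1)]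
        \<pi>_pos[OF \<epsilon>(1)] wkb[OF \<epsilon>(1)] this]
    have "norm (gammaf b D \<epsilon> (\<pi> \<epsilon>) x - (b xs + (A xs + D ** hess \<phi> xs) *v (x - xs)))
      = norm (?a + ?b - ?c)" by (rule arg_cong)
    also have "\<dots> \<le> norm ?a + norm ?b + norm ?c"
      using norm_triangle_ineq4[of "?a + ?b" ?c] norm_triangle_ineq[of ?a ?b] by linarith
    also have "\<dots> \<le> K * \<epsilon>"
      using a b c by (simp add: K_def distrib_right)
    finally show "norm (gammaf b D \<epsilon> (\<pi> \<epsilon>) x - (b xs + (A xs + D ** hess \<phi> xs) *v (x - xs))) \<le> K * \<epsilon>" .
  qed
qed

lemma stable_limit_cycle_compact:
  assumes "stable_limit_cycle b \<Gamma>"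
  shows "compact \<Gamma>"
proof -
  obtain p T where p: "\<forall>t. (p has_vector_derivative b (p t)) (at t)" and \<Gamma>: "\<Gamma> = p ` {0..T}"
    using assms unfolding stable_limit_cycle_def by blast
  have "continuous_on {0..T} p"
    using p by (intro continuous_on_vector_derivative) (blast intro: has_vector_derivative_at_within)
  then show ?thesis unfolding \<Gamma> by (intro compact_continuous_image compact_Icc)
qed

theorem theorem2:
  fixes b :: "real^'n \<Rightarrow> real^'n" and A :: "real^'n \<Rightarrow> real^'n^'n"
    and D :: "real^'n^'n" and \<Gamma> :: "(real^'n) set"
    and \<pi> :: "real \<Rightarrow> real^'n \<Rightarrow> real" and ahat :: "real \<Rightarrow> real"
    and \<phi> \<omega> :: "real^'n \<Rightarrow> real" and R :: "real \<Rightarrow> real^'n \<Rightarrow> real"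
    and U :: "(real^'n) set"
  assumes b_smooth: "smooth_vec_on UNIV b"
    and A_jac: "\<And>x. (b has_derivative (\<lambda>h. A x *v h)) (at x)"
    and D_sym: "transpose D = D"
    and D_pos: "\<And>v. v \<noteq> 0 \<Longrightarrow> v \<bullet> (D *v v) > 0"
    and cycle: "stable_limit_cycle b \<Gamma>"
    and \<pi>_pos: "\<And>\<epsilon> x. \<epsilon> > 0 \<Longrightarrow> \<pi> \<epsilon> x > 0"
    and \<pi>_C2: "\<And>\<epsilon>. \<epsilon> > 0 \<Longrightarrow> Ck_on 2 UNIV (\<pi> \<epsilon>)"
    and \<pi>_density: "\<And>\<epsilon>. \<epsilon> > 0 \<Longrightarrow> (\<pi> \<epsilon> has_integral 1) UNIV"
    and stationary: "\<And>\<epsilon> x. \<epsilon> > 0 \<Longrightarrow> divg (flux b D \<epsilon> (\<pi> \<epsilon>)) x = 0"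
    and U_open: "open U" and \<Gamma>_U: "\<Gamma> \<subseteq> U"
    and \<phi>_smooth: "smooth_on U \<phi>"
    and \<omega>_smooth: "smooth_on U \<omega>" and \<omega>_pos: "\<And>x. x \<in> U \<Longrightarrow> \<omega> x > 0"
    and R_smooth: "\<And>\<epsilon>. \<epsilon> > 0 \<Longrightarrow> smooth_on U (R \<epsilon>)"
    and WKB: "\<And>\<epsilon> x. \<epsilon> > 0 \<Longrightarrow> x \<in> U \<Longrightarrow>
               \<pi> \<epsilon> x = ahat \<epsilon> * exp (- \<phi> x / \<epsilon> + ln (\<omega> x) + R \<epsilon> x)"
    and R_small: "\<exists>K \<epsilon>0. \<epsilon>0 > 0 \<and> (\<forall>\<epsilon> x. 0 < \<epsilon> \<and> \<epsilon> < \<epsilon>0 \<and> x \<in> U \<longrightarrow>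
               \<bar>R \<epsilon> x\<bar> \<le> K * \<epsilon> \<and> norm (grad (R \<epsilon>) x) \<le> K * \<epsilon> \<and>
               norm (hess (R \<epsilon>) x) \<le> K * \<epsilon>)"
    and \<phi>_zero: "\<And>x. x \<in> \<Gamma> \<Longrightarrow> \<phi> x = 0"
    and \<phi>_crit: "\<And>x. x \<in> \<Gamma> \<Longrightarrow> grad \<phi> x = 0"
  shows "(\<forall>C>0. \<exists>K \<epsilon>0. \<epsilon>0 > 0 \<and> (\<forall>\<epsilon> xs x. 0 < \<epsilon> \<and> \<epsilon> < \<epsilon>0 \<and> xs \<in> \<Gamma> \<and>
              norm (x - xs) \<le> C * sqrt \<epsilon> \<longrightarrow>
              norm (gammaf b D \<epsilon> (\<pi> \<epsilon>) x
                    - (b xs + (A xs + D ** hess \<phi> xs) *v (x - xs))) \<le> K * \<epsilon>))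
     \<and> (\<forall>xs :: real \<Rightarrow> real^'n. (\<forall>t. xs t \<in> \<Gamma>) \<and>
              (\<forall>t. (xs has_vector_derivative b (xs t)) (at t)) \<longrightarrow>
          (\<forall>t. ((\<lambda>s. hess \<phi> (xs s)) has_vector_derivative
                 (- (hess \<phi> (xs t) ** A (xs t)) - transpose (A (xs t)) ** hess \<phi> (xs t)
                  - 2 *\<^sub>R (hess \<phi> (xs t) ** D ** hess \<phi> (xs t)))) (at t)))"
proof -
  obtain K e0 where e0: "e0 > 0" and R_bounds: "\<And>\<epsilon> x. 0 < \<epsilon> \<Longrightarrow> \<epsilon> < e0 \<Longrightarrow> x \<in> U \<Longrightarrow>
      norm (grad (R \<epsilon>) x) \<le> K * \<epsilon> \<and> norm (hess (R \<epsilon>) x) \<le> K * \<epsilon>"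
    using R_small by blast
  have HJ: "grad \<phi> x \<bullet> (b x + D *v grad \<phi> x) = 0" if "x \<in> U" for x
    by (rule hamilton_jacobi[OF A_jac \<pi>_pos stationary U_open \<phi>_smooth \<omega>_smooth \<omega>_pos R_smooth WKB
        e0 R_bounds that])
  show ?thesis
  proof (intro conjI allI impI)
    show "\<exists>K \<epsilon>0. \<epsilon>0 > 0 \<and> (\<forall>\<epsilon> xs x. 0 < \<epsilon> \<and> \<epsilon> < \<epsilon>0 \<and> xs \<in> \<Gamma> \<and> norm (x - xs) \<le> C * sqrt \<epsilon> \<longrightarrow>
        norm (gammaf b D \<epsilon> (\<pi> \<epsilon>) x - (b xs + (A xs + D ** hess \<phi> xs) *v (x - xs))) \<le> K * \<epsilon>)"
      if "C > 0" for C
      by (rule gamma_expansion[OF b_smooth A_jac \<pi>_pos U_open stable_limit_cycle_compact[OF cycle]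
          \<Gamma>_U \<phi>_smooth \<omega>_smooth \<omega>_pos R_smooth WKB e0 conjunct1[OF R_bounds] \<phi>_crit that])
    show "((\<lambda>s. hess \<phi> (xs s)) has_vector_derivative
        (- (hess \<phi> (xs t) ** A (xs t)) - transpose (A (xs t)) ** hess \<phi> (xs t)
         - 2 *\<^sub>R (hess \<phi> (xs t) ** D ** hess \<phi> (xs t)))) (at t)"
      if "(\<forall>t. xs t \<in> \<Gamma>) \<and> (\<forall>t. (xs has_vector_derivative b (xs t)) (at t))" for xs t
      using that hess_riccati_along_trajectory[OF b_smooth A_jac D_sym U_open \<phi>_smooth HJ \<Gamma>_U \<phi>_crit]
      by blast
  qed
qed

end
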